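(* The two-dimensional subalgebras of ${\rm A}_4$ are exactly $\langle e_1,e_2\rangle$, $\langle e_1\pm\mathrm{i}e_3,e_2\rangle$, $\langle e_1-e_2,e_3\rangle$ and $\langle e_1,\pm\mathrm{i}e_2+e_3\rangle$. Up to automorphisms of ${\rm A}_4$, every two-dimensional subalgebra is equivalent to one of $\langle e_1,e_2\rangle$, $\langle e_1+\mathrm{i}e_3,e_2\rangle$, $\langle e_1-e_2,e_3\rangle$, $\langle e_1,\mathrm{i}e_2+e_3\rangle$.
   Context: ${\rm A}_4$ is the complex algebra with basis $e_1,e_2,e_3$, unit $e_1$ ($e_1e_i=e_ie_1=e_i$), $e_2e_2=e_2$ and $e_3e_3=-e_1+e_2$; all other products of basis elements are zero. $\mathrm{i}=\sqrt{-1}$. A subalgebra is a linear subspace closed under multiplication (it need not contain $e_1$). Equivalence up to automorphisms means one is mapped onto the other by an algebra automorphism. $\langle S\rangle$ denotes linear span. *)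

theory Defs
  imports "HOL-Analysis.Analysis"
begin

text \<open>The algebra A4: elements are coordinate triples (a1,a2,a3) standing for
  a1 e1 + a2 e2 + a3 e3 over the complex numbers.\<close>

type_synonym A4 = "complex \<times> complex \<times> complex"

definition sc :: "complex \<Rightarrow> A4 \<Rightarrow> A4" where
  "sc c x = (c * fst x, c * fst (snd x), c * snd (snd x))"

definition e1 :: A4 where "e1 = (1, 0, 0)"
definition e2 :: A4 where "e2 = (0, 1, 0)"
definition e3 :: A4 where "e3 = (0, 0, 1)"

text \<open>Bilinear extension of: e1 unit, e2 e2 = e2, e3 e3 = -e1 + e2, other products 0.\<close>
definition mulA4 :: "A4 \<Rightarrow> A4 \<Rightarrow> A4" where
  "mulA4 x y = (case x of (a1, a2, a3) \<Rightarrow> case y of (b1, b2, b3) \<Rightarrow>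
     (a1 * b1 - a3 * b3,
      a1 * b2 + a2 * b1 + a2 * b2 + a3 * b3,
      a1 * b3 + a3 * b1))"

definition subalgebraA4 :: "A4 set \<Rightarrow> bool" where
  "subalgebraA4 V \<longleftrightarrow> module.subspace sc V \<and> (\<forall>x\<in>V. \<forall>y\<in>V. mulA4 x y \<in> V)"

definition automorphismA4 :: "(A4 \<Rightarrow> A4) \<Rightarrow> bool" where
  "automorphismA4 f \<longleftrightarrow> Vector_Spaces.linear sc sc f \<and> bij f \<and>
     (\<forall>x y. f (mulA4 x y) = mulA4 (f x) (f y))"

definition spanA4 :: "A4 set \<Rightarrow> A4 set" where
  "spanA4 S = module.span sc S"

definition dimA4 :: "A4 set \<Rightarrow> nat" where
  "dimA4 V = vector_space.dim sc V"

end

theory Submission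
  imports Defs
begin

text \<open>The maps \<open>chi\<^sub>1 = a\<^sub>1 + a\<^sub>2\<close>, \<open>chi\<^sub>2 = a\<^sub>1 - \<i> a\<^sub>3\<close>, \<open>chi\<^sub>3 = a\<^sub>1 + \<i> a\<^sub>3\<close> are
  multiplicative and jointly injective, so they identify A4 with \<open>\<complex>\<^sup>3\<close> under componentwise
  multiplication. If \<open>x\<close> lies in a subalgebra \<open>V\<close>, so does the idempotent that is 1 exactly at
  the characters where \<open>x\<close> takes a given nonzero value (a polynomial in \<open>x\<close> without constant
  term), and \<open>x\<close> is a multiple of it unless \<open>V\<close> contains two distinct nonzero idempotents.
  Hence a two-dimensional \<open>V\<close> contains two distinct nonzero idempotents \<open>p, q\<close>; among \<open>p\<close>,
  \<open>pq\<close>, \<open>q - p\<close>, \<open>p - pq\<close> there is an orthogonal pair, and it spans \<open>V\<close>. The orthogonal pairs of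
  nonzero 0/1-vectors of \<open>\<complex>\<^sup>3\<close> give the six subalgebras, and the automorphism \<open>e\<^sub>3 \<mapsto> -e\<^sub>3\<close>,
  which swaps \<open>chi\<^sub>2\<close> and \<open>chi\<^sub>3\<close>, identifies two pairs of them.\<close>

interpretation A4: vector_space sc
  by unfold_locales (auto simp: sc_def algebra_simps)

lemma span_pair: "A4.span {a, b} = {sc \<alpha> a + sc \<beta> b | \<alpha> \<beta>. True}"
  unfolding A4.span_insert A4.span_singleton by (auto simp: algebra_simps)

lemma span_e123: "A4.span {e1, e2, e3} = UNIV"
proof -
  have "(a, b, c) \<in> A4.span {e1, e2, e3}" for a b c
  proof -
    have "(a, b, c) = sc a e1 + sc b e2 + sc c e3"
      by (simp add: sc_def e1_def e2_def e3_def)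
    also have "\<dots> \<in> A4.span {e1, e2, e3}"
      by (intro A4.span_add A4.span_scale A4.span_base) auto
    finally show ?thesis .
  qed
  then show ?thesis by auto
qed

lemma independent_e123: "A4.independent {e1, e2, e3}"
  unfolding A4.independent_insert span_pair A4.span_singleton
  by (auto simp: e1_def e2_def e3_def sc_def zero_prod_def A4.independent_empty)

interpretation A4: finite_dimensional_vector_space sc "{e1, e2, e3}"
  by unfold_locales (simp_all add: independent_e123 span_e123)

section \<open>Characters\<close>

datatype chr = Chr1 | Chr2 | Chr3

fun chi :: "chr \<Rightarrow> A4 \<Rightarrow> complex" where
  "chi Chr1 (a1, a2, a3) = a1 + a2"
| "chi Chr2 (a1, a2, a3) = a1 - \<i> * a3"
| "chi Chr3 (a1, a2, a3) = a1 + \<i> * a3"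

lemma all_chr: "(\<forall>k. P k) \<longleftrightarrow> P Chr1 \<and> P Chr2 \<and> P Chr3"
  by (metis chr.exhaust)

lemma ex_chr: "(\<exists>k. P k) \<longleftrightarrow> P Chr1 \<or> P Chr2 \<or> P Chr3"
  by (metis chr.exhaust)

lemma chi_mulA4 [simp]: "chi k (mulA4 x y) = chi k x * chi k y"
  by (cases k; cases x; cases y) (simp_all add: mulA4_def algebra_simps)

lemma chi_add [simp]: "chi k (x + y) = chi k x + chi k y"
  by (cases k; cases x; cases y) (simp_all add: algebra_simps)

lemma chi_diff [simp]: "chi k (x - y) = chi k x - chi k y"
  by (cases k; cases x; cases y) (simp_all add: algebra_simps)

lemma chi_sc [simp]: "chi k (sc c x) = c * chi k x"
  by (cases k; cases x) (simp_all add: sc_def algebra_simps)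

lemma chi_zero [simp]: "chi k 0 = 0"
  by (cases k) (simp_all add: zero_prod_def)

lemma A4_eq_iff_chi: "x = y \<longleftrightarrow> (\<forall>k. chi k x = chi k y)"
proof (intro iffI allI)
  assume chi_eq: "\<forall>k. chi k x = chi k y"
  obtain a1 a2 a3 b1 b2 b3 where "x = (a1, a2, a3)" "y = (b1, b2, b3)"
    by (cases x; cases y)
  moreover from this chi_eq have
    "a1 + a2 = b1 + b2" "a1 - \<i> * a3 = b1 - \<i> * b3" "a1 + \<i> * a3 = b1 + \<i> * b3"
    by (simp_all add: all_chr)
  then have "(a1 - \<i> * a3) + (a1 + \<i> * a3) = (b1 - \<i> * b3) + (b1 + \<i> * b3)"
    and "(a1 + \<i> * a3) - (a1 - \<i> * a3) = (b1 + \<i> * b3) - (b1 - \<i> * b3)"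
    and "a1 + a2 = b1 + b2" by simp_all
  then have "a1 = b1" "a3 = b3" "a2 = b2" by simp_all
  ultimately show "x = y" by simp
qed simp

section \<open>Idempotents in subalgebras\<close>

definition idempotentA4 :: "A4 \<Rightarrow> bool" where
  "idempotentA4 p \<longleftrightarrow> mulA4 p p = p"

definition orthogonal_idempotentsA4 :: "A4 \<Rightarrow> A4 \<Rightarrow> bool" where
  "orthogonal_idempotentsA4 p q \<longleftrightarrow>
     idempotentA4 p \<and> idempotentA4 q \<and> p \<noteq> 0 \<and> q \<noteq> 0 \<and> mulA4 p q = 0"

lemma idempotentA4_iff_chi: "idempotentA4 p \<longleftrightarrow> (\<forall>k. chi k p = 0 \<or> chi k p = 1)"
  unfolding idempotentA4_def A4_eq_iff_chi[of "mulA4 p p"] by auto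

lemma nonzero_iff_chi: "x \<noteq> 0 \<longleftrightarrow> (\<exists>k. chi k x \<noteq> 0)"
  using A4_eq_iff_chi[of x 0] by simp

lemma mulA4_eq_0_iff_chi: "mulA4 x y = 0 \<longleftrightarrow> (\<forall>k. chi k x * chi k y = 0)"
  using A4_eq_iff_chi[of "mulA4 x y" 0] by simp

lemma subalgebra_mul: "subalgebraA4 V \<Longrightarrow> x \<in> V \<Longrightarrow> y \<in> V \<Longrightarrow> mulA4 x y \<in> V"
  unfolding subalgebraA4_def by blast

lemma subalgebra_diff: "subalgebraA4 V \<Longrightarrow> x \<in> V \<Longrightarrow> y \<in> V \<Longrightarrow> x - y \<in> V"
  unfolding subalgebraA4_def by (blast intro: A4.subspace_diff)

lemma subalgebra_sc: "subalgebraA4 V \<Longrightarrow> x \<in> V \<Longrightarrow> sc c x \<in> V"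
  unfolding subalgebraA4_def by (blast intro: A4.subspace_scale)

lemma subalgebra_spectral_idempotent:
  assumes V: "subalgebraA4 V" and x: "x \<in> V" and j: "chi j x \<noteq> 0"
  obtains p where "p \<in> V" "\<And>k. chi k p = (if chi k x = chi j x then 1 else 0)"
proof -
  define factor where "factor m t = (if chi m x = chi j x then 1 else t - chi m x)" for m t
  define kill where
    "kill m z = (if chi m x = chi j x then z else mulA4 z x - sc (chi m x) z)" for m z
  have kill_in: "kill m z \<in> V" if "z \<in> V" for m z
    unfolding kill_def using V x that by (auto intro: subalgebra_diff subalgebra_mul subalgebra_sc)
  have chi_kill: "chi k (kill m z) = chi k z * factor m (chi k x)" for k m z
    by (simp add: kill_def factor_def algebra_simps)
  define z where "z = kill Chr3 (kill Chr2 (kill Chr1 x))"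
  have "z \<in> V" unfolding z_def using x by (intro kill_in)
  define g where "g t = t * factor Chr1 t * factor Chr2 t * factor Chr3 t" for t
  have chi_z: "chi k z = g (chi k x)" for k
    by (simp add: z_def chi_kill g_def)
  have "g (chi k x) = 0" if "chi k x \<noteq> chi j x" for k
    using that by (cases k) (simp_all add: g_def factor_def)
  moreover have "g (chi j x) \<noteq> 0"
    using j by (simp add: g_def factor_def)
  ultimately show thesis
    using \<open>z \<in> V\<close> by (intro that[of "sc (1 / g (chi j x)) z"])
      (auto simp: chi_z intro: subalgebra_sc[OF V])
qed

lemma subalgebra_idempotent_cases:
  assumes V: "subalgebraA4 V" and x: "x \<in> V" "x \<noteq> 0"
  obtains p where "p \<in> V" "idempotentA4 p" "p \<noteq> 0" "x \<in> A4.span {p}"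
  | p q where "p \<in> V" "q \<in> V" "idempotentA4 p" "idempotentA4 q" "p \<noteq> 0" "q \<noteq> 0" "p \<noteq> q"
proof -
  obtain j where j: "chi j x \<noteq> 0" using x(2) nonzero_iff_chi by blast
  obtain p where p: "p \<in> V" "\<And>k. chi k p = (if chi k x = chi j x then 1 else 0)"
    using subalgebra_spectral_idempotent[OF V x(1) j] by blast
  have p_idem: "idempotentA4 p" "p \<noteq> 0"
    using p(2) by (auto simp: idempotentA4_iff_chi nonzero_iff_chi)
  show thesis
  proof (cases "x = sc (chi j x) p")
    case True
    then have "x \<in> A4.span {p}" unfolding A4.span_singleton by blast
    with p(1) p_idem show thesis by (rule that(1))
  next
    case False
    then obtain k where k: "chi k x \<noteq> chi j x * chi k p"
      using A4_eq_iff_chi by auto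
    then have "chi k p = 0" "chi k x \<noteq> 0" using p(2) by (auto split: if_splits)
    then obtain q where q: "q \<in> V" "\<And>l. chi l q = (if chi l x = chi k x then 1 else 0)"
      using subalgebra_spectral_idempotent[OF V x(1)] by blast
    have "idempotentA4 q" "q \<noteq> 0" "p \<noteq> q"
      using q(2) \<open>chi k p = 0\<close> by (auto simp: idempotentA4_iff_chi nonzero_iff_chi)
    with p(1) q(1) p_idem show thesis by (intro that(2))
  qed
qed

lemma subalgebra_subset_span_idempotent:
  assumes V: "subalgebraA4 V"
    and unique: "\<And>p q. \<lbrakk>p \<in> V; q \<in> V; idempotentA4 p; idempotentA4 q; p \<noteq> 0; q \<noteq> 0\<rbrakk> \<Longrightarrow> p = q"
  obtains p where "V \<subseteq> A4.span {p}"
proof (cases "V \<subseteq> {0}")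
  case True
  then show thesis using that A4.span_zero by blast
next
  case False
  then obtain x0 where "x0 \<in> V" "x0 \<noteq> 0" by blast
  then obtain p where p: "p \<in> V" "idempotentA4 p" "p \<noteq> 0"
    by (rule subalgebra_idempotent_cases[OF V]) auto
  have "x \<in> A4.span {p}" if "x \<in> V" for x
  proof (cases "x = 0")
    case False
    with \<open>x \<in> V\<close> show ?thesis
      by (rule subalgebra_idempotent_cases[OF V]) (use p unique in blast)+
  qed (simp add: A4.span_zero)
  then show thesis using that by blast
qed

lemma two_dim_subalgebra_distinct_idempotents:
  assumes V: "subalgebraA4 V" and dim: "dimA4 V = 2"
  obtains p q where "p \<in> V" "q \<in> V" "idempotentA4 p" "idempotentA4 q" "p \<noteq> 0" "q \<noteq> 0" "p \<noteq> q"
proof -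
  have "\<exists>p\<in>V. \<exists>q\<in>V. idempotentA4 p \<and> idempotentA4 q \<and> p \<noteq> 0 \<and> q \<noteq> 0 \<and> p \<noteq> q"
  proof (rule ccontr)
    assume "\<not> ?thesis"
    then obtain p where "V \<subseteq> A4.span {p}"
      using subalgebra_subset_span_idempotent[OF V] by blast
    then have "dimA4 V \<le> 1"
      unfolding dimA4_def using A4.dim_le_card[of V "{p}"] by simp
    with dim show False by simp
  qed
  with that show thesis by blast
qed

lemma subalgebra_orthogonal_idempotents:
  assumes V: "subalgebraA4 V" and pq: "p \<in> V" "q \<in> V"
    and idem: "idempotentA4 p" "idempotentA4 q" and nz: "p \<noteq> 0" "q \<noteq> 0" "p \<noteq> q"
  obtains p' q' where "p' \<in> V" "q' \<in> V" "orthogonal_idempotentsA4 p' q'"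
proof -
  define r where "r = mulA4 p q"
  have "r \<in> V" unfolding r_def using V pq by (rule subalgebra_mul)
  have bits: "chi k p = 0 \<or> chi k p = 1" "chi k q = 0 \<or> chi k q = 1" for k
    using idem by (auto simp: idempotentA4_iff_chi)
  consider "r = 0" | "r = p" | "r \<noteq> 0" "r \<noteq> p" by blast
  then show thesis
  proof cases
    case 1
    then show thesis
      using that pq idem nz by (auto simp: orthogonal_idempotentsA4_def r_def)
  next
    case 2
    then have pq_p: "chi k p * chi k q = chi k p" for k
      unfolding r_def A4_eq_iff_chi[of "mulA4 p q"] by simp
    have "chi k (q - p) = 0 \<or> chi k (q - p) = 1" "chi k p * chi k (q - p) = 0" for k
      using bits[of k] pq_p[of k] by (auto simp: algebra_simps)
    then have "orthogonal_idempotentsA4 p (q - p)"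
      using idem nz by (simp add: orthogonal_idempotentsA4_def idempotentA4_iff_chi mulA4_eq_0_iff_chi)
    then show thesis
      using that pq subalgebra_diff[OF V pq(2,1)] by blast
  next
    case 3
    have chi_r: "chi k r = chi k p * chi k q" for k by (simp add: r_def)
    have "chi k r = 0 \<or> chi k r = 1" "chi k (p - r) = 0 \<or> chi k (p - r) = 1"
      "chi k r * chi k (p - r) = 0" for k
      using bits[of k] chi_r[of k] by auto
    then have "orthogonal_idempotentsA4 r (p - r)"
      using 3 by (simp add: orthogonal_idempotentsA4_def idempotentA4_iff_chi mulA4_eq_0_iff_chi)
    then show thesis
      using that \<open>r \<in> V\<close> subalgebra_diff[OF V pq(1) \<open>r \<in> V\<close>] by blast
  qed
qed

section \<open>The six two-dimensional subalgebras\<close>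

definition u1 :: A4 where "u1 = (0, 1, 0)"
definition u2 :: A4 where "u2 = (1/2, -1/2, \<i>/2)"
definition u3 :: A4 where "u3 = (1/2, -1/2, -\<i>/2)"

lemma chi_u [simp]:
  "chi Chr1 u1 = 1" "chi Chr2 u1 = 0" "chi Chr3 u1 = 0"
  "chi Chr1 u2 = 0" "chi Chr2 u2 = 1" "chi Chr3 u2 = 0"
  "chi Chr1 u3 = 0" "chi Chr2 u3 = 0" "chi Chr3 u3 = 1"
  by (simp_all add: u1_def u2_def u3_def field_simps)

lemma nonzero_idempotent_cases:
  assumes "idempotentA4 p" "p \<noteq> 0"
  shows "p \<in> {u1, u2, u3, u2 + u3, u1 + u3, u1 + u2, u1 + u2 + u3}"
proof -
  have "\<forall>k. chi k p = 0 \<or> chi k p = 1" "\<exists>k. chi k p \<noteq> 0"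
    using assms by (simp_all add: idempotentA4_iff_chi nonzero_iff_chi)
  then show ?thesis
    unfolding insert_iff empty_iff A4_eq_iff_chi[of p] all_chr ex_chr
    by (elim disjE conjE) simp_all
qed

lemma orthogonal_idempotents_cases:
  assumes "orthogonal_idempotentsA4 p q"
  shows "{p, q} \<in> {{u1, u2 + u3}, {u1, u2}, {u1, u3}, {u2, u3}, {u2, u1 + u3}, {u3, u1 + u2}}"
proof -
  have "mulA4 p q = 0" "p \<in> {u1, u2, u3, u2 + u3, u1 + u3, u1 + u2, u1 + u2 + u3}"
    "q \<in> {u1, u2, u3, u2 + u3, u1 + u3, u1 + u2, u1 + u2 + u3}"
    using assms nonzero_idempotent_cases by (auto simp: orthogonal_idempotentsA4_def)
  then show ?thesis
    unfolding mulA4_eq_0_iff_chi all_chr insert_iff empty_iff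
    by (elim disjE) (simp_all add: insert_commute)
qed

lemma orthogonal_idempotents_chi:
  assumes "orthogonal_idempotentsA4 p q"
  shows "chi k p * chi k p = chi k p" "chi k q * chi k q = chi k q" "chi k p * chi k q = 0"
  using assms unfolding orthogonal_idempotentsA4_def idempotentA4_def mulA4_eq_0_iff_chi
  by (metis chi_mulA4)+

lemma subalgebra_span_orthogonal_idempotents:
  assumes pq: "orthogonal_idempotentsA4 p q"
  shows "subalgebraA4 (A4.span {p, q})"
  unfolding subalgebraA4_def
proof (intro conjI ballI A4.subspace_span)
  fix x y assume "x \<in> A4.span {p, q}" "y \<in> A4.span {p, q}"
  then obtain a b c d where x: "x = sc a p + sc b q" and y: "y = sc c p + sc d q"
    unfolding span_pair by blast
  have "mulA4 x y = sc (a * c) p + sc (b * d) q"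
    unfolding A4_eq_iff_chi
  proof
    fix k
    have "chi k (mulA4 x y) = a * c * (chi k p * chi k p) + b * d * (chi k q * chi k q)
        + (a * d + b * c) * (chi k p * chi k q)"
      by (simp add: x y algebra_simps)
    then show "chi k (mulA4 x y) = chi k (sc (a * c) p + sc (b * d) q)"
      by (simp add: orthogonal_idempotents_chi[OF pq])
  qed
  then show "mulA4 x y \<in> A4.span {p, q}"
    unfolding span_pair by blast
qed

lemma dim_span_orthogonal_idempotents:
  assumes pq: "orthogonal_idempotentsA4 p q"
  shows "dimA4 (A4.span {p, q}) = 2"
proof -
  have "p \<notin> A4.span {q}"
  proof
    assume "p \<in> A4.span {q}"
    then obtain c where "p = sc c q" unfolding A4.span_singleton by blast
    then have "mulA4 p p = sc c (mulA4 p q)"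
      unfolding A4_eq_iff_chi[of "mulA4 p p"] by simp
    also have "\<dots> = 0"
      using pq by (simp add: orthogonal_idempotentsA4_def A4.scale_zero_right)
    finally show False
      using pq unfolding orthogonal_idempotentsA4_def idempotentA4_def by metis
  qed
  moreover have "q \<noteq> 0" "p \<noteq> q"
    using pq \<open>p \<notin> A4.span {q}\<close> by (auto simp: orthogonal_idempotentsA4_def A4.span_base)
  ultimately have "A4.independent {p, q}"
    by (simp add: A4.independent_insert A4.independent_empty)
  then show ?thesis
    unfolding dimA4_def using \<open>p \<noteq> q\<close> by (simp add: A4.dim_eq_card_independent)
qed

lemma two_dim_subalgebra_eq_span:
  assumes V: "subalgebraA4 V" "dimA4 V = 2" and pq: "p \<in> V" "q \<in> V"
    and orth: "orthogonal_idempotentsA4 p q"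
  shows "V = A4.span {p, q}"
proof -
  have "A4.subspace V" using V(1) unfolding subalgebraA4_def by simp
  moreover have "A4.span {p, q} \<subseteq> V"
    using pq \<open>A4.subspace V\<close> by (intro A4.span_minimal) auto
  ultimately show ?thesis
    using A4.subspace_dim_equal[of "A4.span {p, q}" V] V(2) dim_span_orthogonal_idempotents[OF orth]
    unfolding dimA4_def by simp
qed

lemma orthogonal_idempotents_u:
  "orthogonal_idempotentsA4 u1 (u2 + u3)" "orthogonal_idempotentsA4 u1 u2"
  "orthogonal_idempotentsA4 u1 u3" "orthogonal_idempotentsA4 u2 u3"
  "orthogonal_idempotentsA4 u2 (u1 + u3)" "orthogonal_idempotentsA4 u3 (u1 + u2)"
  by (simp_all add: orthogonal_idempotentsA4_def idempotentA4_iff_chi mulA4_eq_0_iff_chi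
      nonzero_iff_chi all_chr ex_chr)

lemma two_dim_subalgebra_iff:
  "subalgebraA4 V \<and> dimA4 V = 2 \<longleftrightarrow>
     V \<in> A4.span ` {{u1, u2 + u3}, {u1, u2}, {u1, u3}, {u2, u3}, {u2, u1 + u3}, {u3, u1 + u2}}"
  (is "_ \<longleftrightarrow> V \<in> A4.span ` ?pairs")
proof
  assume "subalgebraA4 V \<and> dimA4 V = 2"
  then have V: "subalgebraA4 V" "dimA4 V = 2" by simp_all
  obtain p0 q0 where "p0 \<in> V" "q0 \<in> V" "idempotentA4 p0" "idempotentA4 q0"
    "p0 \<noteq> 0" "q0 \<noteq> 0" "p0 \<noteq> q0"
    by (rule two_dim_subalgebra_distinct_idempotents[OF V])
  then obtain p q where "p \<in> V" "q \<in> V" "orthogonal_idempotentsA4 p q"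
    by (rule subalgebra_orthogonal_idempotents[OF V(1)])
  then have "V = A4.span {p, q}"
    by (rule two_dim_subalgebra_eq_span[OF V])
  moreover have "A4.span {p, q} \<in> A4.span ` ?pairs"
    using \<open>orthogonal_idempotentsA4 p q\<close> by (rule imageI[OF orthogonal_idempotents_cases])
  ultimately show "V \<in> A4.span ` ?pairs"
    by (simp only:)
next
  assume "V \<in> A4.span ` ?pairs"
  then obtain p q where "V = A4.span {p, q}" "orthogonal_idempotentsA4 p q"
    using orthogonal_idempotents_u unfolding image_insert image_empty insert_iff empty_iff
    by (elim disjE) blast+
  then show "subalgebraA4 V \<and> dimA4 V = 2"
    using subalgebra_span_orthogonal_idempotents dim_span_orthogonal_idempotents by blast
qed

lemma span_pair_eq_span_orthogonal_idempotents:
  assumes orth: "orthogonal_idempotentsA4 p q"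
    and p: "p = sc \<alpha> a + sc \<beta> b" and q: "q = sc \<gamma> a + sc \<delta> b"
  shows "A4.span {a, b} = A4.span {p, q}"
proof -
  have "A4.span {p, q} \<subseteq> A4.span {a, b}"
    using p q by (intro A4.span_minimal A4.subspace_span) (auto simp: span_pair)
  moreover have "A4.dim {a, b} \<le> card {a, b}"
    by (rule A4.dim_le_card') simp
  moreover have "card {a, b} \<le> 2"
    by (simp add: card_insert_if)
  ultimately have "A4.span {p, q} = A4.span {a, b}"
    using dim_span_orthogonal_idempotents[OF orth] unfolding dimA4_def
    by (intro A4.subspace_dim_equal A4.subspace_span) simp_all
  then show ?thesis ..
qed

lemma chi_e [simp]:
  "chi Chr1 e1 = 1" "chi Chr2 e1 = 1" "chi Chr3 e1 = 1"
  "chi Chr1 e2 = 1" "chi Chr2 e2 = 0" "chi Chr3 e2 = 0"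
  "chi Chr1 e3 = 0" "chi Chr2 e3 = - \<i>" "chi Chr3 e3 = \<i>"
  by (simp_all add: e1_def e2_def e3_def)

lemma spanA4_eq_span_u:
  "spanA4 {e1, e2} = A4.span {u1, u2 + u3}"
  "spanA4 {e1 + sc \<i> e3, e2} = A4.span {u1, u2}"
  "spanA4 {e1 - sc \<i> e3, e2} = A4.span {u1, u3}"
  "spanA4 {e1 - e2, e3} = A4.span {u2, u3}"
  "spanA4 {e1, sc \<i> e2 + e3} = A4.span {u2, u1 + u3}"
  "spanA4 {e1, - sc \<i> e2 + e3} = A4.span {u3, u1 + u2}"
proof -
  show "spanA4 {e1, e2} = A4.span {u1, u2 + u3}"
    unfolding spanA4_def
    by (rule span_pair_eq_span_orthogonal_idempotents[OF orthogonal_idempotents_u(1), where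
        \<alpha> = 0 and \<beta> = 1 and \<gamma> = 1 and \<delta> = "-1"]) (simp_all add: A4_eq_iff_chi all_chr)
  show "spanA4 {e1 + sc \<i> e3, e2} = A4.span {u1, u2}"
    unfolding spanA4_def
    by (rule span_pair_eq_span_orthogonal_idempotents[OF orthogonal_idempotents_u(2), where
        \<alpha> = 0 and \<beta> = 1 and \<gamma> = "1/2" and \<delta> = "-1/2"]) (simp_all add: A4_eq_iff_chi all_chr)
  show "spanA4 {e1 - sc \<i> e3, e2} = A4.span {u1, u3}"
    unfolding spanA4_def
    by (rule span_pair_eq_span_orthogonal_idempotents[OF orthogonal_idempotents_u(3), where
        \<alpha> = 0 and \<beta> = 1 and \<gamma> = "1/2" and \<delta> = "-1/2"]) (simp_all add: A4_eq_iff_chi all_chr)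
  show "spanA4 {e1 - e2, e3} = A4.span {u2, u3}"
    unfolding spanA4_def
    by (rule span_pair_eq_span_orthogonal_idempotents[OF orthogonal_idempotents_u(4), where
        \<alpha> = "1/2" and \<beta> = "\<i>/2" and \<gamma> = "1/2" and \<delta> = "-\<i>/2"])
      (simp_all add: A4_eq_iff_chi all_chr field_simps)
  show "spanA4 {e1, sc \<i> e2 + e3} = A4.span {u2, u1 + u3}"
    unfolding spanA4_def
    by (rule span_pair_eq_span_orthogonal_idempotents[OF orthogonal_idempotents_u(5), where
        \<alpha> = "1/2" and \<beta> = "\<i>/2" and \<gamma> = "1/2" and \<delta> = "-\<i>/2"])
      (simp_all add: A4_eq_iff_chi all_chr field_simps)
  show "spanA4 {e1, - sc \<i> e2 + e3} = A4.span {u3, u1 + u2}"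
    unfolding spanA4_def
    by (rule span_pair_eq_span_orthogonal_idempotents[OF orthogonal_idempotents_u(6), where
        \<alpha> = "1/2" and \<beta> = "-\<i>/2" and \<gamma> = "1/2" and \<delta> = "\<i>/2"])
      (simp_all add: A4_eq_iff_chi all_chr field_simps)
qed

definition negate_e3 :: "A4 \<Rightarrow> A4" where
  "negate_e3 x = (fst x, fst (snd x), - snd (snd x))"

lemma chi_negate_e3 [simp]:
  "chi Chr1 (negate_e3 x) = chi Chr1 x"
  "chi Chr2 (negate_e3 x) = chi Chr3 x"
  "chi Chr3 (negate_e3 x) = chi Chr2 x"
  by (cases x; simp add: negate_e3_def)+

lemma negate_e3_add: "negate_e3 (x + y) = negate_e3 x + negate_e3 y"
  by (simp add: negate_e3_def)

lemma linear_negate_e3: "Vector_Spaces.linear sc sc negate_e3"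
  unfolding Vector_Spaces.linear_iff
  by (simp add: A4.vector_space_axioms negate_e3_add negate_e3_def sc_def)

lemma automorphism_negate_e3: "automorphismA4 negate_e3"
proof -
  have "negate_e3 (negate_e3 x) = x" for x
    by (simp add: negate_e3_def)
  then have "bij negate_e3"
    by (rule involuntory_imp_bij)
  moreover have "negate_e3 (mulA4 x y) = mulA4 (negate_e3 x) (negate_e3 y)" for x y
    by (simp add: A4_eq_iff_chi[of "negate_e3 _"] all_chr)
  ultimately show ?thesis
    unfolding automorphismA4_def using linear_negate_e3 by blast
qed

lemma automorphism_id: "automorphismA4 id"
  unfolding automorphismA4_def by (simp add: A4.linear_id)

lemma negate_e3_image_span: "negate_e3 ` A4.span S = A4.span (negate_e3 ` S)"
  using module_hom.span_image[OF module_hom_linearI[OF linear_negate_e3]] by simp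

lemma negate_e3_u [simp]: "negate_e3 u1 = u1" "negate_e3 u2 = u3" "negate_e3 u3 = u2"
  by (simp_all add: A4_eq_iff_chi[of "negate_e3 _"] all_chr)

lemma two_dim_subalgebra_normal_form:
  assumes "subalgebraA4 V" "dimA4 V = 2"
  obtains f where "automorphismA4 f"
    "f ` V \<in> A4.span ` {{u1, u2 + u3}, {u1, u2}, {u2, u3}, {u2, u1 + u3}}"
proof -
  have "V \<in> A4.span ` {{u1, u2 + u3}, {u1, u2}, {u1, u3}, {u2, u3}, {u2, u1 + u3}, {u3, u1 + u2}}"
    using assms two_dim_subalgebra_iff by blast
  then consider "V \<in> A4.span ` {{u1, u2 + u3}, {u1, u2}, {u2, u3}, {u2, u1 + u3}}"
    | "V = A4.span {u1, u3}" | "V = A4.span {u3, u1 + u2}"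
    by blast
  then show thesis
  proof cases
    case 1
    then show thesis using that automorphism_id by simp
  next
    case 2
    then have "negate_e3 ` V = A4.span {u1, u2}"
      by (simp add: negate_e3_image_span)
    then show thesis using that automorphism_negate_e3 by simp
  next
    case 3
    then have "negate_e3 ` V = A4.span {u2, u1 + u3}"
      by (simp add: negate_e3_image_span negate_e3_add insert_commute)
    then show thesis using that automorphism_negate_e3 by simp
  qed
qed

theorem mainTheorem11:
  shows "(\<forall>V. (subalgebraA4 V \<and> dimA4 V = 2) \<longleftrightarrow>
            V \<in> {spanA4 {e1, e2},
                 spanA4 {e1 + sc \<i> e3, e2},
                 spanA4 {e1 - sc \<i> e3, e2},
                 spanA4 {e1 - e2, e3},
                 spanA4 {e1, sc \<i> e2 + e3},
                 spanA4 {e1, - sc \<i> e2 + e3}})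
       \<and> (\<forall>V. subalgebraA4 V \<and> dimA4 V = 2 \<longrightarrow>
            (\<exists>f W. automorphismA4 f \<and> f ` V = W \<and>
               W \<in> {spanA4 {e1, e2},
                    spanA4 {e1 + sc \<i> e3, e2},
                    spanA4 {e1 - e2, e3},
                    spanA4 {e1, sc \<i> e2 + e3}}))"
proof -
  have six: "{spanA4 {e1, e2}, spanA4 {e1 + sc \<i> e3, e2}, spanA4 {e1 - sc \<i> e3, e2},
      spanA4 {e1 - e2, e3}, spanA4 {e1, sc \<i> e2 + e3}, spanA4 {e1, - sc \<i> e2 + e3}} =
    A4.span ` {{u1, u2 + u3}, {u1, u2}, {u1, u3}, {u2, u3}, {u2, u1 + u3}, {u3, u1 + u2}}"
    by (simp only: spanA4_eq_span_u image_insert image_empty)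
  have four: "{spanA4 {e1, e2}, spanA4 {e1 + sc \<i> e3, e2}, spanA4 {e1 - e2, e3},
      spanA4 {e1, sc \<i> e2 + e3}} = A4.span ` {{u1, u2 + u3}, {u1, u2}, {u2, u3}, {u2, u1 + u3}}"
    by (simp only: spanA4_eq_span_u image_insert image_empty)
  show ?thesis
    unfolding six four using two_dim_subalgebra_iff two_dim_subalgebra_normal_form by metis
qed

end
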